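(* Let $(G,J)$ be a simply-connected, non-abelian, $2$-step nilpotent Lie group equipped with a left-invariant complex structure $J$. Assume that the Lie algebra $(\mathfrak g,\mu)$ of $G$ is such that $J\mu(\mathfrak g,\mathfrak g)$ is contained in the center of $\mathfrak g$. Then there are no left-invariant $HCF_+$ static metrics on $(G,J)$, i.e. there is no left-invariant Hermitian metric $g$ with $\Theta(g)=c\,g$ for some $c\in\mathbb R$.
   Context: For a Hermitian metric $g$ with Chern connection $\nabla$ (curvature $\Omega$, torsion $T$, $T_{js\bar p}=g_{l\bar p}T^l_{js}$), $S(g)_{j\bar k}=g^{\bar rs}\Omega_{s\bar rj\bar k}$, $Q^2(g)_{j\bar k}=g^{\bar pq}g^{\bar rs}T_{sq\bar k}T_{\overline{rp}j}$, and $\Theta(g)=S(g)+\frac12Q^2(g)$. *)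

theory Defs
  imports "HOL-Analysis.Analysis"
begin

text \<open>Left-invariant data on a Lie group are encoded on its Lie algebra
  g = real^'n.  Complexification g (x) C = complex^'n.\<close>

definition cx :: "real^'n \<Rightarrow> complex^'n" where
  "cx x = (\<chi> i. complex_of_real (x $ i))"

definition vre :: "complex^'n \<Rightarrow> real^'n" where
  "vre v = (\<chi> i. Re (v $ i))"

definition vim :: "complex^'n \<Rightarrow> real^'n" where
  "vim v = (\<chi> i. Im (v $ i))"

definition vcnj :: "complex^'n \<Rightarrow> complex^'n" where
  "vcnj v = (\<chi> i. cnj (v $ i))"

definition cext1 :: "(real^'n \<Rightarrow> real^'n) \<Rightarrow> complex^'n \<Rightarrow> complex^'n" where
  "cext1 A v = cx (A (vre v)) + \<i> *s cx (A (vim v))"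

definition cext2 :: "(real^'n \<Rightarrow> real^'n \<Rightarrow> real^'n) \<Rightarrow> complex^'n \<Rightarrow> complex^'n \<Rightarrow> complex^'n" where
  "cext2 B u v = cx (B (vre u) (vre v)) - cx (B (vim u) (vim v))
      + \<i> *s (cx (B (vre u) (vim v)) + cx (B (vim u) (vre v)))"

definition cform :: "(real^'n \<Rightarrow> real^'n \<Rightarrow> real) \<Rightarrow> complex^'n \<Rightarrow> complex^'n \<Rightarrow> complex" where
  "cform B u v = complex_of_real (B (vre u) (vre v)) - complex_of_real (B (vim u) (vim v))
      + \<i> * (complex_of_real (B (vre u) (vim v)) + complex_of_real (B (vim u) (vre v)))"

definition lie_algebra :: "(real^'n \<Rightarrow> real^'n \<Rightarrow> real^'n) \<Rightarrow> bool" where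
  "lie_algebra \<mu> \<longleftrightarrow> bilinear \<mu> \<and> (\<forall>x. \<mu> x x = 0) \<and>
     (\<forall>x y z. \<mu> x (\<mu> y z) + \<mu> y (\<mu> z x) + \<mu> z (\<mu> x y) = 0)"

definition center :: "(real^'n \<Rightarrow> real^'n \<Rightarrow> real^'n) \<Rightarrow> (real^'n) set" where
  "center \<mu> = {z. \<forall>x. \<mu> z x = 0}"

definition two_step_nilpotent :: "(real^'n \<Rightarrow> real^'n \<Rightarrow> real^'n) \<Rightarrow> bool" where
  "two_step_nilpotent \<mu> \<longleftrightarrow> (\<forall>x y z. \<mu> (\<mu> x y) z = 0) \<and> (\<exists>x y. \<mu> x y \<noteq> 0)"

definition complex_structure :: "(real^'n \<Rightarrow> real^'n) \<Rightarrow> bool" where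
  "complex_structure J \<longleftrightarrow> linear J \<and> (\<forall>x. J (J x) = - x)"

definition integrable_cs :: "(real^'n \<Rightarrow> real^'n) \<Rightarrow> (real^'n \<Rightarrow> real^'n \<Rightarrow> real^'n) \<Rightarrow> bool" where
  "integrable_cs J \<mu> \<longleftrightarrow>
     (\<forall>x y. \<mu> (J x) (J y) - J (\<mu> (J x) y) - J (\<mu> x (J y)) - \<mu> x y = 0)"

definition hermitian_metric :: "(real^'n \<Rightarrow> real^'n) \<Rightarrow> (real^'n \<Rightarrow> real^'n \<Rightarrow> real) \<Rightarrow> bool" where
  "hermitian_metric J g \<longleftrightarrow> bilinear g \<and> (\<forall>x y. g x y = g y x) \<and>
     (\<forall>x. x \<noteq> 0 \<longrightarrow> g x x > 0) \<and> (\<forall>x y. g (J x) (J y) = g x y)"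

definition T10 :: "(real^'n \<Rightarrow> real^'n) \<Rightarrow> (complex^'n) set" where
  "T10 J = {Z. cext1 J Z = \<i> *s Z}"

text \<open>Left-invariant connection: nabla_x y = L x y. Torsion and curvature (complexified).\<close>
definition torC :: "(real^'n \<Rightarrow> real^'n \<Rightarrow> real^'n) \<Rightarrow> (real^'n \<Rightarrow> real^'n \<Rightarrow> real^'n)
     \<Rightarrow> complex^'n \<Rightarrow> complex^'n \<Rightarrow> complex^'n" where
  "torC L \<mu> X Y = cext2 L X Y - cext2 L Y X - cext2 \<mu> X Y"

definition curvC :: "(real^'n \<Rightarrow> real^'n \<Rightarrow> real^'n) \<Rightarrow> (real^'n \<Rightarrow> real^'n \<Rightarrow> real^'n)
     \<Rightarrow> complex^'n \<Rightarrow> complex^'n \<Rightarrow> complex^'n \<Rightarrow> complex^'n" where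
  "curvC L \<mu> X Y Z = cext2 L X (cext2 L Y Z) - cext2 L Y (cext2 L X Z) - cext2 L (cext2 \<mu> X Y) Z"

definition chern_connection :: "(real^'n \<Rightarrow> real^'n) \<Rightarrow> (real^'n \<Rightarrow> real^'n \<Rightarrow> real^'n)
     \<Rightarrow> (real^'n \<Rightarrow> real^'n \<Rightarrow> real) \<Rightarrow> (real^'n \<Rightarrow> real^'n \<Rightarrow> real^'n) \<Rightarrow> bool" where
  "chern_connection J \<mu> g L \<longleftrightarrow> bilinear L \<and>
     (\<forall>x y z. g (L x y) z + g y (L x z) = 0) \<and>
     (\<forall>x y. L x (J y) = J (L x y)) \<and>
     (\<forall>Z\<in>T10 J. \<forall>W\<in>T10 J. torC L \<mu> Z (vcnj W) = 0)"

definition unitary_frame :: "(real^'n \<Rightarrow> real^'n) \<Rightarrow> (real^'n \<Rightarrow> real^'n \<Rightarrow> real)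
     \<Rightarrow> nat \<Rightarrow> (nat \<Rightarrow> complex^'n) \<Rightarrow> bool" where
  "unitary_frame J g m F \<longleftrightarrow> 2 * m = CARD('n) \<and> (\<forall>s<m. F s \<in> T10 J) \<and>
     (\<forall>s<m. \<forall>r<m. cform g (F s) (vcnj (F r)) = (if s = r then 1 else 0))"

text \<open>In a unitary frame g^{r-bar s} = delta, so
  S(X,Ybar) = sum_s Omega(Z_s, Zbar_s, X, Ybar),
  Q^2(X,Ybar) = sum_{s,q} T(Z_s,Z_q,Ybar) T(Zbar_s,Zbar_q,X).\<close>
definition chern_S where
  "chern_S g L \<mu> m F X Y =
     (\<Sum>s<m. cform g (curvC L \<mu> (F s) (vcnj (F s)) X) (vcnj Y))"

definition chern_Q2 where
  "chern_Q2 g L \<mu> m F X Y =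
     (\<Sum>s<m. \<Sum>q<m. cform g (torC L \<mu> (F s) (F q)) (vcnj Y)
                     * cform g (torC L \<mu> (vcnj (F s)) (vcnj (F q))) X)"

definition Theta where
  "Theta g L \<mu> m F X Y = chern_S g L \<mu> m F X Y + chern_Q2 g L \<mu> m F X Y / 2"

definition hcf_plus_static :: "(real^'n \<Rightarrow> real^'n) \<Rightarrow> (real^'n \<Rightarrow> real^'n \<Rightarrow> real^'n)
     \<Rightarrow> (real^'n \<Rightarrow> real^'n \<Rightarrow> real) \<Rightarrow> bool" where
  "hcf_plus_static J \<mu> g \<longleftrightarrow> hermitian_metric J g \<and>
     (\<exists>L m F (c::real). chern_connection J \<mu> g L \<and> unitary_frame J g m F \<and>
        (\<forall>X\<in>T10 J. \<forall>Y\<in>T10 J.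
            Theta g L \<mu> m F X Y = complex_of_real c * cform g X (vcnj Y)))"

end

theory Submission
  imports Defs
begin

(* Let z be the largest J-invariant subspace of the centre; by hypothesis it contains the
   derived algebra [g,g]. Write h(U,W) = g(U, conj W) and let Z_1..Z_m be a unitary frame.

   If V is a (1,0)-vector h-orthogonal to z, then the Chern connection is determined on V by
   brackets which all land in z, and one computes S(V,V) = -N and Q^2(V,V) = 2N, where
   N = sum_{s,q} |h([conj Z_s, V], Z_q)|^2. Hence Theta(V,V) = 0, and since such V != 0 exist
   ([g,g] != 0, so z is a proper subspace), the constant c in Theta = c g must vanish.

   On the other hand, for X = x - iJx with 0 != x = [a,b] in z, the same computation gives
   Theta(X,X) = sum_s |nabla_{Z_s} X|^2 + 1/2 sum_{s,q} |h([Z_s,Z_q], X)|^2. If this vanishes,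
   then nabla X = 0, which kills the mixed brackets against X, integrability kills the
   (0,2)-brackets, so h([U,W], X) = 0 for all U, W; for U = a, W = b this says g(x,x) = 0. *)

lemma vre_cx [simp]: "vre (cx x) = x" by (simp add: vre_def cx_def)
lemma vim_cx [simp]: "vim (cx x) = 0" by (simp add: vim_def cx_def vec_eq_iff)
lemma vre_add [simp]: "vre (U + W) = vre U + vre W" by (simp add: vre_def vec_eq_iff)
lemma vim_add [simp]: "vim (U + W) = vim U + vim W" by (simp add: vim_def vec_eq_iff)
lemma vre_diff [simp]: "vre (U - W) = vre U - vre W" by (simp add: vre_def vec_eq_iff)
lemma vim_diff [simp]: "vim (U - W) = vim U - vim W" by (simp add: vim_def vec_eq_iff)
lemma vre_minus [simp]: "vre (- U) = - vre U" by (simp add: vre_def vec_eq_iff)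
lemma vim_minus [simp]: "vim (- U) = - vim U" by (simp add: vim_def vec_eq_iff)
lemma vre_zero [simp]: "vre 0 = 0" by (simp add: vre_def vec_eq_iff)
lemma vim_zero [simp]: "vim 0 = 0" by (simp add: vim_def vec_eq_iff)
lemma vre_smult [simp]: "vre (a *s U) = Re a *\<^sub>R vre U - Im a *\<^sub>R vim U"
  by (simp add: vre_def vim_def vec_eq_iff)
lemma vim_smult [simp]: "vim (a *s U) = Im a *\<^sub>R vre U + Re a *\<^sub>R vim U"
  by (simp add: vre_def vim_def vec_eq_iff)
lemma vre_vcnj [simp]: "vre (vcnj U) = vre U" by (simp add: vre_def vcnj_def)
lemma vim_vcnj [simp]: "vim (vcnj U) = - vim U" by (simp add: vim_def vcnj_def vec_eq_iff)
lemma vre_sum [simp]: "vre (sum f A) = (\<Sum>a\<in>A. vre (f a))"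
  by (induction A rule: infinite_finite_induct) auto
lemma vim_sum [simp]: "vim (sum f A) = (\<Sum>a\<in>A. vim (f a))"
  by (induction A rule: infinite_finite_induct) auto

lemma complex_vec_eq_iff: "U = W \<longleftrightarrow> vre U = vre W \<and> vim U = vim W"
  by (auto simp: vre_def vim_def vec_eq_iff complex_eq_iff)

lemma vcnj_add [simp]: "vcnj (U + W) = vcnj U + vcnj W" by (simp add: complex_vec_eq_iff)
lemma vcnj_diff [simp]: "vcnj (U - W) = vcnj U - vcnj W" by (simp add: complex_vec_eq_iff)
lemma vcnj_minus [simp]: "vcnj (- U) = - vcnj U" by (simp add: complex_vec_eq_iff)
lemma vcnj_zero [simp]: "vcnj 0 = 0" by (simp add: complex_vec_eq_iff)
lemma vcnj_smult [simp]: "vcnj (a *s U) = cnj a *s vcnj U" by (simp add: complex_vec_eq_iff)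
lemma vcnj_vcnj [simp]: "vcnj (vcnj U) = U" by (simp add: complex_vec_eq_iff)
lemma vcnj_sum [simp]: "vcnj (sum f A) = (\<Sum>a\<in>A. vcnj (f a))"
  by (simp add: complex_vec_eq_iff sum_negf)

lemma Re_cform [simp]: "Re (cform B U W) = B (vre U) (vre W) - B (vim U) (vim W)"
  by (simp add: cform_def)
lemma Im_cform [simp]: "Im (cform B U W) = B (vre U) (vim W) + B (vim U) (vre W)"
  by (simp add: cform_def)
lemma vre_cext1 [simp]: "vre (cext1 A U) = A (vre U)" by (simp add: cext1_def)
lemma vim_cext1 [simp]: "vim (cext1 A U) = A (vim U)" by (simp add: cext1_def)
lemma vre_cext2 [simp]: "vre (cext2 B U W) = B (vre U) (vre W) - B (vim U) (vim W)"
  by (simp add: cext2_def)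
lemma vim_cext2 [simp]: "vim (cext2 B U W) = B (vre U) (vim W) + B (vim U) (vre W)"
  by (simp add: cext2_def)

lemmas bilinear_expand = bilinear_ladd bilinear_radd bilinear_lmul bilinear_rmul
  bilinear_lneg bilinear_rneg bilinear_lsub bilinear_rsub bilinear_lzero bilinear_rzero

lemmas linear_expand = linear_add linear_diff linear_neg linear_0 linear_scale

context
  fixes B :: "real^'n \<Rightarrow> real^'n \<Rightarrow> real^'n"
  assumes "bilinear B"
begin

lemma cext2_ladd: "cext2 B (U + V) W = cext2 B U W + cext2 B V W"
  and cext2_radd: "cext2 B W (U + V) = cext2 B W U + cext2 B W V"
  and cext2_lsub: "cext2 B (U - V) W = cext2 B U W - cext2 B V W"
  and cext2_rsub: "cext2 B W (U - V) = cext2 B W U - cext2 B W V"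
  and cext2_lminus: "cext2 B (- U) W = - cext2 B U W"
  and cext2_rminus: "cext2 B W (- U) = - cext2 B W U"
  and cext2_lzero: "cext2 B 0 W = 0"
  and cext2_rzero: "cext2 B W 0 = 0"
  and cext2_lsmult: "cext2 B (a *s U) W = a *s cext2 B U W"
  and cext2_rsmult: "cext2 B W (a *s U) = a *s cext2 B W U"
  and cext2_vcnj: "vcnj (cext2 B U W) = cext2 B (vcnj U) (vcnj W)"
  and cext2_cx: "cext2 B (cx x) (cx y) = cx (B x y)"
  by (simp_all add: complex_vec_eq_iff bilinear_expand[OF \<open>bilinear B\<close>] algebra_simps)

lemma cext2_lsum: "cext2 B (sum f A) W = (\<Sum>a\<in>A. cext2 B (f a) W)"
  by (induction A rule: infinite_finite_induct) (auto simp: cext2_lzero cext2_ladd)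

lemma cext2_rsum: "cext2 B W (sum f A) = (\<Sum>a\<in>A. cext2 B W (f a))"
  by (induction A rule: infinite_finite_induct) (auto simp: cext2_rzero cext2_radd)

lemmas cext2_expand = cext2_ladd cext2_radd cext2_lsub cext2_rsub cext2_lminus cext2_rminus
  cext2_lzero cext2_rzero cext2_lsmult cext2_rsmult cext2_lsum cext2_rsum

end

context
  fixes B :: "real^'n \<Rightarrow> real^'n \<Rightarrow> real"
  assumes "bilinear B"
begin

lemma cform_ladd: "cform B (U + V) W = cform B U W + cform B V W"
  and cform_radd: "cform B W (U + V) = cform B W U + cform B W V"
  and cform_lsub: "cform B (U - V) W = cform B U W - cform B V W"
  and cform_rsub: "cform B W (U - V) = cform B W U - cform B W V"
  and cform_lminus: "cform B (- U) W = - cform B U W"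
  and cform_rminus: "cform B W (- U) = - cform B W U"
  and cform_lzero: "cform B 0 W = 0"
  and cform_rzero: "cform B W 0 = 0"
  and cform_lsmult: "cform B (a *s U) W = a * cform B U W"
  and cform_rsmult: "cform B W (a *s U) = a * cform B W U"
  and cnj_cform: "cnj (cform B U W) = cform B (vcnj U) (vcnj W)"
  by (simp_all add: complex_eq_iff bilinear_expand[OF \<open>bilinear B\<close>] algebra_simps)

lemma cform_lsum: "cform B (sum f A) W = (\<Sum>a\<in>A. cform B (f a) W)"
  by (induction A rule: infinite_finite_induct) (auto simp: cform_lzero cform_ladd)

lemma cform_rsum: "cform B W (sum f A) = (\<Sum>a\<in>A. cform B W (f a))"
  by (induction A rule: infinite_finite_induct) (auto simp: cform_rzero cform_radd)

lemmas cform_expand = cform_ladd cform_radd cform_lsub cform_rsub cform_lminus cform_rminus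
  cform_lzero cform_rzero cform_lsmult cform_rsmult cform_lsum cform_rsum

end

lemma orthogonal_family_complete:
  fixes g :: "'a::euclidean_space \<Rightarrow> 'a \<Rightarrow> real" and b :: "nat \<Rightarrow> 'a"
  assumes "bilinear g" and g_pos: "\<And>x. x \<noteq> 0 \<Longrightarrow> g x x > 0"
    and orth: "\<And>i j. i < DIM('a) \<Longrightarrow> j < DIM('a) \<Longrightarrow> i \<noteq> j \<Longrightarrow> g (b i) (b j) = 0"
    and nondeg: "\<And>i. i < DIM('a) \<Longrightarrow> g (b i) (b i) \<noteq> 0"
    and d_orth: "\<And>i. i < DIM('a) \<Longrightarrow> g d (b i) = 0"
  shows "d = 0"
proof -
  define E where "E = b ` {..<DIM('a)}"
  have "inj_on b {..<DIM('a)}"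
    by (rule inj_onI) (metis lessThan_iff nondeg orth)
  then have card_E: "card E = DIM('a)"
    by (simp add: E_def card_image)
  have "independent E"
    unfolding independent_explicit
  proof (intro conjI allI impI ballI)
    show "finite E" by (simp add: E_def)
    fix c w assume sum0: "(\<Sum>v\<in>E. c v *\<^sub>R v) = 0" and "w \<in> E"
    then obtain i where i: "i < DIM('a)" "w = b i" by (auto simp: E_def)
    have "0 = g w (\<Sum>v\<in>E. c v *\<^sub>R v)"
      by (simp add: sum0 bilinear_expand[OF \<open>bilinear g\<close>])
    also have "\<dots> = (\<Sum>v\<in>E. c v * g w v)"
      using \<open>bilinear g\<close> by (simp add: bilinear_def linear_sum linear_scale)
    also have "\<dots> = c w * g w w"
      using \<open>w \<in> E\<close> i by (subst sum.remove[of E w]) (auto simp: E_def intro!: sum.neutral dest: orth)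
    finally show "c w = 0" using nondeg i by simp
  qed
  then have "UNIV \<subseteq> span E"
    using card_E card_ge_dim_independent[of E UNIV] by simp
  have "g d x = 0" if "x \<in> span E" for x
    using that
  proof (induction rule: span_induct)
    show "subspace {x. g d x = 0}"
      unfolding subspace_def by (simp add: bilinear_expand[OF \<open>bilinear g\<close>])
    show "x \<in> E \<Longrightarrow> g d x = 0" for x by (auto simp: E_def d_orth)
  qed
  with \<open>UNIV \<subseteq> span E\<close> have "g d d = 0" by blast
  then show "d = 0" using g_pos by force
qed

lemma exists_orthogonal_to_proper_subspace:
  fixes g :: "'a::euclidean_space \<Rightarrow> 'a \<Rightarrow> real"
  assumes "bilinear g" and g_pos: "\<And>x. x \<noteq> 0 \<Longrightarrow> g x x > 0"
    and "subspace S" "S \<noteq> UNIV"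
  obtains v where "v \<noteq> 0" "\<And>w. w \<in> S \<Longrightarrow> g v w = 0"
proof -
  have "dim S < DIM('a)"
    using \<open>subspace S\<close> \<open>S \<noteq> UNIV\<close> dim_eq_full dim_subset_UNIV[of S]
    by (metis order_less_le span_eq_iff)
  then obtain u where "u \<noteq> 0" and u_orth: "\<And>w. w \<in> span S \<Longrightarrow> orthogonal u w"
    using orthogonal_to_subspace_exists by blast
  define G where "G v = (\<Sum>b\<in>Basis. g v b *\<^sub>R b)" for v :: 'a
  have lin_g: "linear (g v)" for v
    using \<open>bilinear g\<close> by (simp add: bilinear_def)
  have G_inner: "g v w = G v \<bullet> w" for v w
  proof -
    have "g v w = g v (\<Sum>b\<in>Basis. (w \<bullet> b) *\<^sub>R b)" by (simp add: euclidean_representation)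
    also have "\<dots> = G v \<bullet> w"
      by (simp add: G_def linear_sum[OF lin_g] linear_scale[OF lin_g] inner_sum_left
          inner_commute[of w] mult.commute)
    finally show ?thesis .
  qed
  have "linear G"
    by (rule linearI) (simp_all add: G_def bilinear_expand[OF \<open>bilinear g\<close>] sum.distrib
        scaleR_add_left scaleR_sum_right)
  moreover have "inj G"
  proof (rule injI)
    fix a b assume "G a = G b"
    then have "G (a - b) = 0" using \<open>linear G\<close> by (simp add: linear_diff)
    then have "g (a - b) (a - b) = 0" by (simp add: G_inner)
    then show "a = b" using g_pos by (metis less_irrefl right_minus_eq)
  qed
  ultimately obtain v where v: "G v = u"
    by (metis linear_inj_imp_surj surjD)
  show thesis
  proof
    show "v \<noteq> 0" using v \<open>u \<noteq> 0\<close> \<open>linear G\<close> by (auto simp: linear_0)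
    show "g v w = 0" if "w \<in> S" for w
      using u_orth[of w] that v by (simp add: G_inner orthogonal_def span_base)
  qed
qed

locale hermitian_structure =
  fixes J :: "real^'n \<Rightarrow> real^'n" and g :: "real^'n \<Rightarrow> real^'n \<Rightarrow> real"
  assumes complex_structure: "complex_structure J"
    and hermitian: "hermitian_metric J g"
begin

lemma linear_J: "linear J"
  and J_J [simp]: "J (J x) = - x"
  using complex_structure by (simp_all add: complex_structure_def)

lemma bilinear_g: "bilinear g"
  and g_sym: "g x y = g y x"
  and g_pos: "x \<noteq> 0 \<Longrightarrow> g x x > 0"
  and g_J_J [simp]: "g (J x) (J y) = g x y"
  using hermitian by (simp_all add: hermitian_metric_def)

lemmas J_expand = linear_expand[OF linear_J]
lemmas g_expand = bilinear_expand[OF bilinear_g]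

lemma g_J_left: "g (J x) y = - g x (J y)"
  using g_J_J[of "J x" y] by (simp add: g_expand)

lemma g_nonneg: "g x x \<ge> 0"
  by (cases "x = 0") (auto simp: g_expand dest: g_pos)

abbreviation JC :: "complex^'n \<Rightarrow> complex^'n" where "JC \<equiv> cext1 J"
abbreviation gC :: "complex^'n \<Rightarrow> complex^'n \<Rightarrow> complex" where "gC \<equiv> cform g"

lemmas gC_expand = cform_expand[OF bilinear_g]

lemma gC_sym: "gC U W = gC W U"
  by (simp add: complex_eq_iff g_sym)

lemma cnj_gC: "cnj (gC U W) = gC (vcnj U) (vcnj W)"
  by (rule cnj_cform[OF bilinear_g])

lemma gC_JC_JC: "gC (JC U) (JC W) = gC U W"
  by (simp add: complex_eq_iff)

definition hnorm_sq :: "complex^'n \<Rightarrow> real" where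
  "hnorm_sq U = g (vre U) (vre U) + g (vim U) (vim U)"

lemma gC_vcnj_self: "gC U (vcnj U) = of_real (hnorm_sq U)"
  by (simp add: complex_eq_iff hnorm_sq_def g_expand g_sym[of "vim U" "vre U"])

lemma hnorm_sq_nonneg: "hnorm_sq U \<ge> 0"
  using g_nonneg[of "vre U"] g_nonneg[of "vim U"] by (simp add: hnorm_sq_def)

lemma hnorm_sq_eq_0_iff: "hnorm_sq U = 0 \<longleftrightarrow> U = 0"
proof
  assume "hnorm_sq U = 0"
  then have "g (vre U) (vre U) = 0" "g (vim U) (vim U) = 0"
    using g_nonneg[of "vre U"] g_nonneg[of "vim U"] by (simp_all add: hnorm_sq_def)
  then show "U = 0"
    using g_pos by (metis complex_vec_eq_iff less_irrefl vim_zero vre_zero)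
qed (simp add: hnorm_sq_def g_expand)

lemma gC_vcnj_self_eq_0_iff: "gC U (vcnj U) = 0 \<longleftrightarrow> U = 0"
  by (simp add: gC_vcnj_self hnorm_sq_eq_0_iff)

lemma T10_iff: "Z \<in> T10 J \<longleftrightarrow> vim Z = - J (vre Z)"
  unfolding T10_def complex_vec_eq_iff by (auto simp: J_expand)

lemma vcnj_T10_iff: "vcnj Z \<in> T10 J \<longleftrightarrow> vim Z = J (vre Z)"
  unfolding T10_iff by auto

lemma JC_T10: "Z \<in> T10 J \<Longrightarrow> JC Z = \<i> *s Z"
  by (simp add: T10_def)

lemma T10_diff: "Z \<in> T10 J \<Longrightarrow> W \<in> T10 J \<Longrightarrow> Z - W \<in> T10 J"
  and T10_smult: "Z \<in> T10 J \<Longrightarrow> a *s Z \<in> T10 J"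
  by (simp_all add: T10_iff J_expand)

lemma T10_sum: "(\<And>a. a \<in> A \<Longrightarrow> f a \<in> T10 J) \<Longrightarrow> sum f A \<in> T10 J"
  by (induction A rule: infinite_finite_induct) (auto simp: T10_iff J_expand)

lemma T10_of_real: "cx x - \<i> *s cx (J x) \<in> T10 J"
  by (simp add: T10_iff)

lemma gC_T10_T10: assumes "Z \<in> T10 J" "W \<in> T10 J" shows "gC Z W = 0"
proof -
  have "gC Z W = gC (JC Z) (JC W)" by (simp add: gC_JC_JC)
  also have "\<dots> = - gC Z W" using assms by (simp add: JC_T10 gC_expand)
  finally show ?thesis by simp
qed

lemma gC_T01_T01: "vcnj Z \<in> T10 J \<Longrightarrow> vcnj W \<in> T10 J \<Longrightarrow> gC Z W = 0"
  using gC_T10_T10 cnj_gC by (metis complex_cnj_zero_iff)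

lemma gC_T10_vcnj_T10:
  assumes "Z \<in> T10 J" "W \<in> T10 J"
  shows "Re (gC Z (vcnj W)) = 2 * g (vre Z) (vre W)"
    and "Im (gC Z (vcnj W)) = 2 * g (vre Z) (J (vre W))"
  using assms by (simp_all add: T10_iff g_expand g_J_left)

definition pr10 :: "complex^'n \<Rightarrow> complex^'n" where
  "pr10 U = (1/2) *s (U - \<i> *s JC U)"

definition pr01 :: "complex^'n \<Rightarrow> complex^'n" where
  "pr01 U = (1/2) *s (U + \<i> *s JC U)"

lemma pr10_T10: "pr10 U \<in> T10 J"
  and vcnj_pr01_T10: "vcnj (pr01 U) \<in> T10 J"
  and pr10_id: "U \<in> T10 J \<Longrightarrow> pr10 U = U"
  and pr10_T01: "vcnj U \<in> T10 J \<Longrightarrow> pr10 U = 0"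
  and vcnj_pr10: "vcnj (pr10 U) = pr01 (vcnj U)"
  and pr10_minus: "pr10 (- U) = - pr10 U"
  and pr10_diff: "pr10 (U - W) = pr10 U - pr10 W"
  and pr10_zero [simp]: "pr10 0 = 0"
  and pr01_zero [simp]: "pr01 0 = 0"
  by (simp_all add: complex_vec_eq_iff pr10_def pr01_def T10_iff vcnj_T10_iff J_expand
      scaleR_add_right scaleR_diff_right)

lemma pr10_add_pr01: "pr10 U + pr01 U = U"
  by (simp add: pr10_def pr01_def vec_eq_iff algebra_simps)

lemma gC_T10_pr01: "Z \<in> T10 J \<Longrightarrow> gC Z (pr01 U) = gC Z U"
  using pr10_add_pr01[of U] gC_T10_T10[OF _ pr10_T10] by (metis add.left_neutral gC_expand(2))

lemma gC_pr10_T01: "vcnj W \<in> T10 J \<Longrightarrow> gC (pr10 U) W = gC U W"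
  using pr10_add_pr01[of U] gC_T01_T01[OF vcnj_pr01_T10] by (metis add.right_neutral gC_expand(1))

lemma bracket_T10:
  fixes \<mu> :: "real^'n \<Rightarrow> real^'n \<Rightarrow> real^'n"
  assumes "bilinear \<mu>" "integrable_cs J \<mu>" "Z \<in> T10 J" "W \<in> T10 J"
  shows "cext2 \<mu> Z W \<in> T10 J"
proof -
  define z w where "z = vre Z" and "w = vre W"
  have Z: "vim Z = - J z" and W: "vim W = - J w"
    using assms by (auto simp: T10_iff z_def w_def)
  have "J (\<mu> (J z) (J w) - J (\<mu> (J z) w) - J (\<mu> z (J w)) - \<mu> z w) = 0"
    using \<open>integrable_cs J \<mu>\<close> by (simp add: integrable_cs_def J_expand)
  then have "J (\<mu> (J z) (J w)) + \<mu> (J z) w + \<mu> z (J w) - J (\<mu> z w) = 0"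
    by (simp add: J_expand)
  then show ?thesis
    unfolding T10_iff using bilinear_expand[OF \<open>bilinear \<mu>\<close>]
    by (simp add: Z W z_def[symmetric] w_def[symmetric] J_expand algebra_simps)
qed

end

locale hermitian_frame = hermitian_structure J g for J :: "real^'n \<Rightarrow> real^'n" and g +
  fixes m :: nat and F :: "nat \<Rightarrow> complex^'n"
  assumes unitary_frame: "unitary_frame J g m F"
begin

lemma CARD_eq_2m: "CARD('n) = 2 * m"
  and F_T10: "s < m \<Longrightarrow> F s \<in> T10 J"
  and gC_F_vcnj_F: "s < m \<Longrightarrow> r < m \<Longrightarrow> gC (F s) (vcnj (F r)) = (if s = r then 1 else 0)"
  using unitary_frame by (simp_all add: unitary_frame_def)

lemma T10_eq_0_if_orthogonal_frame:
  assumes "D \<in> T10 J" and D_orth: "\<And>r. r < m \<Longrightarrow> gC D (vcnj (F r)) = 0"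
  shows "D = 0"
proof -
  define e where "e s = vre (F s)" for s
  define b where "b i = (if i < m then e i else J (e (i - m)))" for i
  have g_e: "g (e s) (e r) = (if s = r then 1/2 else 0)" "g (e s) (J (e r)) = 0"
    if "s < m" "r < m" for s r
    using gC_T10_vcnj_T10[OF F_T10 F_T10, of s r] gC_F_vcnj_F[of s r] that
    by (auto simp: e_def split: if_splits)
  have "vre D = 0"
  proof (rule orthogonal_family_complete[OF bilinear_g g_pos, of b])
    fix i j :: nat assume "i < DIM(real^'n)" "j < DIM(real^'n)"
    then have "i < 2 * m" "j < 2 * m" by (simp_all add: CARD_eq_2m)
    then show "i \<noteq> j \<Longrightarrow> g (b i) (b j) = 0" and "g (b i) (b i) \<noteq> 0"
      by (auto simp: b_def g_e g_J_left g_sym[of "J _"] g_expand)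
    show "g (vre D) (b i) = 0"
      using \<open>i < 2 * m\<close> gC_T10_vcnj_T10[OF \<open>D \<in> T10 J\<close> F_T10] D_orth
      by (auto simp: b_def e_def)
  qed
  then show "D = 0"
    using \<open>D \<in> T10 J\<close> by (simp add: complex_vec_eq_iff T10_iff J_expand)
qed

lemma frame_expansion_T10:
  assumes "U \<in> T10 J"
  shows "U = (\<Sum>s<m. gC U (vcnj (F s)) *s F s)"
proof -
  define D where "D = U - (\<Sum>s<m. gC U (vcnj (F s)) *s F s)"
  have "D = 0"
  proof (rule T10_eq_0_if_orthogonal_frame)
    show "D \<in> T10 J"
      unfolding D_def by (intro T10_diff assms T10_sum T10_smult F_T10) auto
    fix r assume "r < m"
    have "(\<Sum>s<m. gC U (vcnj (F s)) * gC (F s) (vcnj (F r))) = gC U (vcnj (F r))"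
      using \<open>r < m\<close> by (simp add: gC_F_vcnj_F if_distrib cong: if_cong)
    then show "gC D (vcnj (F r)) = 0"
      by (simp add: D_def gC_expand)
  qed
  then show ?thesis by (simp add: D_def)
qed

lemma gC_vcnj_self_T10:
  assumes "U \<in> T10 J"
  shows "gC U (vcnj U) = (\<Sum>s<m. gC U (vcnj (F s)) * cnj (gC U (vcnj (F s))))"
proof -
  have "gC U (vcnj U) = gC (\<Sum>s<m. gC U (vcnj (F s)) *s F s) (vcnj U)"
    using frame_expansion_T10[OF assms] by simp
  also have "\<dots> = (\<Sum>s<m. gC U (vcnj (F s)) * cnj (gC U (vcnj (F s))))"
    by (simp add: gC_expand cnj_gC gC_sym[of "F _"])
  finally show ?thesis .
qed

lemma frame_expansion:
  "U = (\<Sum>s<m. gC (pr10 U) (vcnj (F s)) *s F s)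
     + (\<Sum>s<m. cnj (gC (pr10 (vcnj U)) (vcnj (F s))) *s vcnj (F s))"
proof -
  have "pr01 U = vcnj (pr10 (vcnj U))" by (simp add: vcnj_pr10)
  also have "pr10 (vcnj U) = (\<Sum>s<m. gC (pr10 (vcnj U)) (vcnj (F s)) *s F s)"
    by (rule frame_expansion_T10[OF pr10_T10])
  finally have "pr01 U = (\<Sum>s<m. cnj (gC (pr10 (vcnj U)) (vcnj (F s))) *s vcnj (F s))"
    by simp
  with frame_expansion_T10[OF pr10_T10, of U] pr10_add_pr01[of U] show ?thesis
    by simp
qed

context
  fixes B :: "real^'n \<Rightarrow> real^'n \<Rightarrow> real^'n"
  assumes "bilinear B"
begin

lemma gC_cext2_eq_0_if_frame_left:
  assumes "\<And>s. s < m \<Longrightarrow> gC (cext2 B (F s) W) Y = 0"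
    and "\<And>s. s < m \<Longrightarrow> gC (cext2 B (vcnj (F s)) W) Y = 0"
  shows "gC (cext2 B U W) Y = 0"
  using assms by (subst frame_expansion[of U]) (simp add: cext2_expand[OF \<open>bilinear B\<close>] gC_expand)

lemma gC_cext2_eq_0_if_frame_right:
  assumes "\<And>s. s < m \<Longrightarrow> gC (cext2 B W (F s)) Y = 0"
    and "\<And>s. s < m \<Longrightarrow> gC (cext2 B W (vcnj (F s))) Y = 0"
  shows "gC (cext2 B W U) Y = 0"
  using assms by (subst frame_expansion[of U]) (simp add: cext2_expand[OF \<open>bilinear B\<close>] gC_expand)

end

end

locale chern_structure = hermitian_structure J g for J :: "real^'n \<Rightarrow> real^'n" and g +
  fixes \<mu> :: "real^'n \<Rightarrow> real^'n \<Rightarrow> real^'n" and L :: "real^'n \<Rightarrow> real^'n \<Rightarrow> real^'n"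
  assumes lie_algebra: "lie_algebra \<mu>"
    and chern_connection: "chern_connection J \<mu> g L"
begin

lemma bilinear_mu: "bilinear \<mu>"
  and mu_self: "\<mu> x x = 0"
  using lie_algebra by (simp_all add: lie_algebra_def)

lemma bilinear_L: "bilinear L"
  and L_skew: "g (L x y) z + g y (L x z) = 0"
  and L_J: "L x (J y) = J (L x y)"
  and torC_T10_T01: "Z \<in> T10 J \<Longrightarrow> W \<in> T10 J \<Longrightarrow> torC L \<mu> Z (vcnj W) = 0"
  using chern_connection by (simp_all add: chern_connection_def)

lemmas mu_expand = bilinear_expand[OF bilinear_mu]
lemmas L_expand = bilinear_expand[OF bilinear_L]

lemma mu_antisym: "\<mu> x y = - \<mu> y x"
proof -
  have "\<mu> x y + \<mu> y x = \<mu> (x + y) (x + y)"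
    by (simp add: mu_expand mu_self[of x] mu_self[of y])
  also have "\<dots> = 0"
    by (rule mu_self)
  finally show ?thesis
    by (simp add: eq_neg_iff_add_eq_0)
qed

abbreviation nablaC :: "complex^'n \<Rightarrow> complex^'n \<Rightarrow> complex^'n" where "nablaC \<equiv> cext2 L"
abbreviation brC :: "complex^'n \<Rightarrow> complex^'n \<Rightarrow> complex^'n" where "brC \<equiv> cext2 \<mu>"

lemmas nablaC_expand = cext2_expand[OF bilinear_L]
lemmas brC_expand = cext2_expand[OF bilinear_mu]

lemma vcnj_nablaC: "vcnj (nablaC U W) = nablaC (vcnj U) (vcnj W)"
  by (rule cext2_vcnj[OF bilinear_L])

lemma vcnj_brC: "vcnj (brC U W) = brC (vcnj U) (vcnj W)"
  by (rule cext2_vcnj[OF bilinear_mu])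

lemma torC_vcnj: "torC L \<mu> (vcnj U) (vcnj W) = vcnj (torC L \<mu> U W)"
  by (simp add: torC_def vcnj_nablaC vcnj_brC)

lemma brC_antisym: "brC U W = - brC W U"
  by (simp add: complex_vec_eq_iff mu_expand mu_antisym[of "vre U"] mu_antisym[of "vim U"]
      algebra_simps)

lemma nablaC_T10: "W \<in> T10 J \<Longrightarrow> nablaC U W \<in> T10 J"
proof -
  have "nablaC U (JC W) = JC (nablaC U W)"
    by (simp add: complex_vec_eq_iff L_J L_expand J_expand)
  then show "W \<in> T10 J \<Longrightarrow> nablaC U W \<in> T10 J"
    by (simp add: T10_def nablaC_expand)
qed

lemma gC_nablaC_skew: "gC (nablaC U V) W = - gC V (nablaC U W)"
proof -
  have "g (L x y) z = - g y (L x z)" for x y z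
    using L_skew by (simp add: eq_neg_iff_add_eq_0)
  then show ?thesis by (simp add: complex_eq_iff g_expand)
qed

lemma nablaC_T01_T10:
  assumes "Z \<in> T10 J" "W \<in> T10 J"
  shows "nablaC (vcnj W) Z = pr10 (brC (vcnj W) Z)"
proof -
  have "nablaC Z (vcnj W) - nablaC (vcnj W) Z - brC Z (vcnj W) = 0"
    using torC_T10_T01[OF assms] by (simp add: torC_def)
  then have "pr10 (nablaC Z (vcnj W)) - pr10 (nablaC (vcnj W) Z) - pr10 (brC Z (vcnj W)) = 0"
    by (metis pr10_diff pr10_zero)
  moreover have "pr10 (nablaC Z (vcnj W)) = 0"
    using assms by (intro pr10_T01) (simp add: vcnj_nablaC nablaC_T10)
  moreover have "pr10 (nablaC (vcnj W) Z) = nablaC (vcnj W) Z"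
    using assms by (intro pr10_id nablaC_T10)
  ultimately have "- nablaC (vcnj W) Z = pr10 (brC Z (vcnj W))"
    by simp
  then show ?thesis
    by (metis brC_antisym minus_minus pr10_minus)
qed

lemma nablaC_T10_T01:
  assumes "Z \<in> T10 J" "W \<in> T10 J"
  shows "nablaC W (vcnj Z) = pr01 (brC W (vcnj Z))"
  using arg_cong[OF nablaC_T01_T10[OF assms], of vcnj] by (simp add: vcnj_nablaC vcnj_brC vcnj_pr10)

lemma gC_brC_mixed_if_nablaC_eq_0:
  assumes "Z \<in> T10 J" "W \<in> T10 J" "X \<in> T10 J" and "nablaC Z X = 0"
  shows "gC X (brC Z (vcnj W)) = 0"
proof -
  have "gC X (brC Z (vcnj W)) = gC X (pr01 (brC Z (vcnj W)))"
    using assms by (simp add: gC_T10_pr01)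
  also have "\<dots> = gC X (nablaC Z (vcnj W))"
    using assms by (simp add: nablaC_T10_T01)
  also have "\<dots> = - gC (nablaC Z X) (vcnj W)"
    by (simp add: gC_nablaC_skew)
  finally show ?thesis
    using assms by (simp add: gC_expand)
qed

end

locale two_step_chern = chern_structure J g \<mu> L
  for J :: "real^'n \<Rightarrow> real^'n" and g \<mu> L +
  assumes two_step_nilpotent: "two_step_nilpotent \<mu>"
    and J_derived_central: "\<forall>x y. J (\<mu> x y) \<in> center \<mu>"
    and integrable: "integrable_cs J \<mu>"
begin

definition Jcenter :: "(real^'n) set" where
  "Jcenter = {w. w \<in> center \<mu> \<and> J w \<in> center \<mu>}"

definition Jcentral :: "complex^'n \<Rightarrow> bool" where
  "Jcentral U \<longleftrightarrow> vre U \<in> Jcenter \<and> vim U \<in> Jcenter"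

lemma subspace_Jcenter: "subspace Jcenter"
  by (simp add: subspace_def Jcenter_def center_def mu_expand J_expand)

lemma J_Jcenter: "w \<in> Jcenter \<Longrightarrow> J w \<in> Jcenter"
  by (simp add: Jcenter_def center_def J_expand mu_expand)

lemma mu_Jcenter: "\<mu> x y \<in> Jcenter"
  using two_step_nilpotent J_derived_central
  by (simp add: Jcenter_def center_def two_step_nilpotent_def)

lemma mu_Jcenter_left: "w \<in> Jcenter \<Longrightarrow> \<mu> w x = 0"
  and mu_Jcenter_right: "w \<in> Jcenter \<Longrightarrow> \<mu> x w = 0"
  by (simp_all add: Jcenter_def center_def mu_antisym[of x])

lemma Jcenter_neq_UNIV: "Jcenter \<noteq> UNIV"
  using two_step_nilpotent mu_Jcenter_left
  by (auto simp: two_step_nilpotent_def)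

lemma Jcentral_brC: "Jcentral (brC U W)"
  and Jcentral_vcnj: "Jcentral U \<Longrightarrow> Jcentral (vcnj U)"
  and Jcentral_pr10: "Jcentral U \<Longrightarrow> Jcentral (pr10 U)"
  and Jcentral_pr01: "Jcentral U \<Longrightarrow> Jcentral (pr01 U)"
  using subspace_Jcenter J_Jcenter mu_Jcenter
  by (simp_all add: Jcentral_def pr10_def pr01_def subspace_add subspace_diff subspace_neg
      subspace_scale)

lemma brC_Jcentral_left: "Jcentral U \<Longrightarrow> brC U W = 0"
  and brC_Jcentral_right: "Jcentral U \<Longrightarrow> brC W U = 0"
  by (simp_all add: complex_vec_eq_iff Jcentral_def mu_Jcenter_left mu_Jcenter_right)

lemma gC_nablaC_Jcentral_self:
  assumes "Jcentral C" "V \<in> T10 J"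
  shows "gC (nablaC C V) (vcnj V) = 0"
proof -
  have "nablaC (pr01 C) V = 0"
    using nablaC_T01_T10[OF \<open>V \<in> T10 J\<close> vcnj_pr01_T10, of C] assms
    by (simp add: brC_Jcentral_left Jcentral_pr01)
  moreover have "gC (nablaC (pr10 C) V) (vcnj V) = - gC V (pr01 (brC (pr10 C) (vcnj V)))"
    using assms by (simp add: gC_nablaC_skew nablaC_T10_T01 pr10_T10)
  moreover have "brC (pr10 C) (vcnj V) = 0"
    using assms by (simp add: brC_Jcentral_left Jcentral_pr10)
  moreover have "nablaC C V = nablaC (pr10 C) V + nablaC (pr01 C) V"
    by (metis pr10_add_pr01 nablaC_expand(1))
  ultimately show ?thesis
    by (simp add: gC_expand)
qed

lemma gC_curvC_orthogonal_Jcentral: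
  assumes "Z \<in> T10 J" "V \<in> T10 J" and orth: "\<And>C. Jcentral C \<Longrightarrow> gC V C = 0"
  shows "gC (curvC L \<mu> Z (vcnj Z) V) (vcnj V)
    = - gC (pr10 (brC (vcnj Z) V)) (vcnj (pr10 (brC (vcnj Z) V)))"
proof -
  define B where "B = nablaC Z V"
  have "B \<in> T10 J" using assms by (simp add: B_def nablaC_T10)
  have "gC B (vcnj B) = - gC V (pr01 (brC Z (vcnj B)))"
    using assms \<open>B \<in> T10 J\<close> by (simp add: B_def gC_nablaC_skew nablaC_T10_T01)
  then have "gC B (vcnj B) = 0"
    by (simp add: orth Jcentral_pr01 Jcentral_brC)
  then have "gC (nablaC (vcnj Z) (nablaC Z V)) (vcnj V) = 0"
    by (simp add: B_def gC_nablaC_skew vcnj_nablaC)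
  moreover have "gC (nablaC Z (nablaC (vcnj Z) V)) (vcnj V)
      = - gC (pr10 (brC (vcnj Z) V)) (vcnj (pr10 (brC (vcnj Z) V)))"
    using assms by (simp add: gC_nablaC_skew nablaC_T01_T10 nablaC_T10_T01 vcnj_pr10 vcnj_brC)
  moreover have "gC (nablaC (brC Z (vcnj Z)) V) (vcnj V) = 0"
    using assms by (simp add: gC_nablaC_Jcentral_self Jcentral_brC)
  ultimately show ?thesis
    by (simp add: curvC_def gC_expand)
qed

lemma gC_torC_orthogonal_Jcentral:
  assumes "Z \<in> T10 J" "W \<in> T10 J" "V \<in> T10 J" and orth: "\<And>C. Jcentral C \<Longrightarrow> gC V C = 0"
  shows "gC (torC L \<mu> Z W) (vcnj V)
    = cnj (gC (brC (vcnj W) V) (vcnj Z)) - cnj (gC (brC (vcnj Z) V) (vcnj W))"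
proof -
  have nabla: "gC (nablaC A B) (vcnj V) = - cnj (gC (brC (vcnj A) V) (vcnj B))"
    if "A \<in> T10 J" "B \<in> T10 J" for A B
  proof -
    have "gC (nablaC A B) (vcnj V) = - gC B (pr01 (brC A (vcnj V)))"
      using that assms by (simp add: gC_nablaC_skew nablaC_T10_T01)
    also have "\<dots> = - cnj (gC (brC (vcnj A) V) (vcnj B))"
      using that by (simp add: gC_T10_pr01 cnj_gC vcnj_brC gC_sym)
    finally show ?thesis .
  qed
  have "gC (brC Z W) (vcnj V) = cnj (gC V (brC (vcnj Z) (vcnj W)))"
    by (simp add: cnj_gC vcnj_brC gC_sym)
  also have "\<dots> = 0"
    by (simp add: orth Jcentral_brC)
  finally show ?thesis
    using nabla[of Z W] nabla[of W Z] assms by (simp add: torC_def gC_expand)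
qed

lemma gC_curvC_Jcentral:
  assumes "Z \<in> T10 J" "X \<in> T10 J" "Jcentral X"
  shows "gC (curvC L \<mu> Z (vcnj Z) X) (vcnj X) = gC (nablaC Z X) (vcnj (nablaC Z X))"
proof -
  have "nablaC (vcnj Z) X = 0"
    using assms by (simp add: nablaC_T01_T10 brC_Jcentral_right)
  moreover have "gC (nablaC (vcnj Z) (nablaC Z X)) (vcnj X) = - gC (nablaC Z X) (vcnj (nablaC Z X))"
    by (simp add: gC_nablaC_skew vcnj_nablaC)
  moreover have "gC (nablaC (brC Z (vcnj Z)) X) (vcnj X) = 0"
    using assms by (simp add: gC_nablaC_Jcentral_self Jcentral_brC)
  ultimately show ?thesis
    by (simp add: curvC_def gC_expand nablaC_expand)
qed

lemma gC_torC_Jcentral: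
  assumes "Z \<in> T10 J" "W \<in> T10 J" "X \<in> T10 J" "Jcentral X"
  shows "gC (torC L \<mu> Z W) (vcnj X) = - gC (brC Z W) (vcnj X)"
proof -
  have nabla: "gC (nablaC A B) (vcnj X) = 0" if "A \<in> T10 J" "B \<in> T10 J" for A B
    using that assms
    by (simp add: gC_nablaC_skew nablaC_T10_T01 brC_Jcentral_right Jcentral_vcnj gC_expand)
  show ?thesis
    using nabla[of Z W] nabla[of W Z] assms by (simp add: torC_def gC_expand)
qed

lemma exists_T10_orthogonal_Jcentral:
  obtains V where "V \<in> T10 J" "V \<noteq> 0" "\<And>C. Jcentral C \<Longrightarrow> gC V C = 0"
proof -
  obtain v where "v \<noteq> 0" and v_orth: "\<And>w. w \<in> Jcenter \<Longrightarrow> g v w = 0"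
    using exists_orthogonal_to_proper_subspace[OF bilinear_g g_pos subspace_Jcenter Jcenter_neq_UNIV]
    by blast
  show thesis
  proof
    show "cx v - \<i> *s cx (J v) \<in> T10 J" by (rule T10_of_real)
    have "vre (cx v - \<i> *s cx (J v)) = v" by simp
    with \<open>v \<noteq> 0\<close> show "cx v - \<i> *s cx (J v) \<noteq> 0" by (metis vre_zero)
  next
    fix C assume "Jcentral C"
    then have "g v (vre C) = 0" "g v (vim C) = 0" "g v (J (vre C)) = 0" "g v (J (vim C)) = 0"
      by (auto simp: Jcentral_def intro!: v_orth J_Jcenter)
    then show "gC (cx v - \<i> *s cx (J v)) C = 0"
      by (simp add: complex_eq_iff g_expand g_J_left)
  qed
qed

end

locale two_step_chern_frame = two_step_chern J g \<mu> L + hermitian_frame J g m F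
  for J :: "real^'n \<Rightarrow> real^'n" and g \<mu> L m F
begin

definition bracket_coeff :: "complex^'n \<Rightarrow> nat \<Rightarrow> nat \<Rightarrow> complex" where
  "bracket_coeff V s q = gC (brC (vcnj (F s)) V) (vcnj (F q))"

context
  fixes V :: "complex^'n"
  assumes V_T10: "V \<in> T10 J" and orth: "\<And>C. Jcentral C \<Longrightarrow> gC V C = 0"
begin

lemma chern_S_orthogonal_Jcentral:
  "chern_S g L \<mu> m F V V = - (\<Sum>s<m. \<Sum>q<m. bracket_coeff V s q * cnj (bracket_coeff V s q))"
proof -
  have "gC (curvC L \<mu> (F s) (vcnj (F s)) V) (vcnj V)
      = - (\<Sum>q<m. bracket_coeff V s q * cnj (bracket_coeff V s q))" if "s < m" for s
    using that V_T10 orth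
    by (simp add: gC_curvC_orthogonal_Jcentral F_T10 gC_vcnj_self_T10[OF pr10_T10]
        gC_pr10_T01 bracket_coeff_def)
  then show ?thesis
    by (simp add: chern_S_def sum_negf)
qed

lemma bracket_coeff_cross_sum:
  assumes "q < m"
  shows "(\<Sum>s<m. bracket_coeff V q s * cnj (bracket_coeff V s q)) = 0"
proof -
  define A where "A = pr10 (brC (vcnj (F q)) V)"
  have "(\<Sum>s<m. bracket_coeff V q s * cnj (bracket_coeff V s q))
      = (\<Sum>s<m. gC A (vcnj (F s)) * gC (brC (F s) (vcnj V)) (F q))"
    by (simp add: bracket_coeff_def A_def gC_pr10_T01 F_T10 cnj_gC vcnj_brC)
  also have "\<dots> = gC (brC (\<Sum>s<m. gC A (vcnj (F s)) *s F s) (vcnj V)) (F q)"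
    by (simp add: brC_expand gC_expand)
  also have "\<dots> = gC (brC A (vcnj V)) (F q)"
    by (simp flip: frame_expansion_T10[OF pr10_T10] add: A_def)
  also have "\<dots> = 0"
    by (simp add: A_def brC_Jcentral_left Jcentral_pr10 Jcentral_brC gC_expand)
  finally show ?thesis .
qed

lemma bracket_coeff_cross_double_sum:
  "(\<Sum>s<m. \<Sum>q<m. cnj (bracket_coeff V s q) * bracket_coeff V q s) = 0"
  "(\<Sum>s<m. \<Sum>q<m. cnj (bracket_coeff V q s) * bracket_coeff V s q) = 0"
proof -
  have "(\<Sum>s<m. cnj (bracket_coeff V s q) * bracket_coeff V q s) = 0" if "q < m" for q
    using bracket_coeff_cross_sum[OF that] by (simp add: mult.commute)
  then show "(\<Sum>s<m. \<Sum>q<m. cnj (bracket_coeff V s q) * bracket_coeff V q s) = 0"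
    by (subst sum.swap) simp
  then have "cnj (\<Sum>s<m. \<Sum>q<m. cnj (bracket_coeff V s q) * bracket_coeff V q s) = 0"
    by simp
  then show "(\<Sum>s<m. \<Sum>q<m. cnj (bracket_coeff V q s) * bracket_coeff V s q) = 0"
    by (simp add: mult.commute)
qed

lemma gC_torC_frame_orthogonal_Jcentral:
  assumes "s < m" "q < m"
  shows "gC (torC L \<mu> (F s) (F q)) (vcnj V) = cnj (bracket_coeff V q s) - cnj (bracket_coeff V s q)"
    and "gC (torC L \<mu> (vcnj (F s)) (vcnj (F q))) V = bracket_coeff V q s - bracket_coeff V s q"
proof -
  show tor: "gC (torC L \<mu> (F s) (F q)) (vcnj V) = cnj (bracket_coeff V q s) - cnj (bracket_coeff V s q)"
    using assms V_T10 orth by (simp add: gC_torC_orthogonal_Jcentral F_T10 bracket_coeff_def)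
  have "gC (torC L \<mu> (vcnj (F s)) (vcnj (F q))) V = cnj (gC (torC L \<mu> (F s) (F q)) (vcnj V))"
    by (simp add: torC_vcnj cnj_gC)
  then show "gC (torC L \<mu> (vcnj (F s)) (vcnj (F q))) V = bracket_coeff V q s - bracket_coeff V s q"
    by (simp add: tor)
qed

lemma chern_Q2_orthogonal_Jcentral:
  "chern_Q2 g L \<mu> m F V V = 2 * (\<Sum>s<m. \<Sum>q<m. bracket_coeff V s q * cnj (bracket_coeff V s q))"
proof -
  let ?\<beta> = "bracket_coeff V"
  let ?N = "\<Sum>s<m. \<Sum>q<m. ?\<beta> s q * cnj (?\<beta> s q)"
  have "chern_Q2 g L \<mu> m F V V
      = (\<Sum>s<m. \<Sum>q<m. cnj (?\<beta> q s) * ?\<beta> q s + cnj (?\<beta> s q) * ?\<beta> s q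
          - cnj (?\<beta> q s) * ?\<beta> s q - cnj (?\<beta> s q) * ?\<beta> q s)"
    unfolding chern_Q2_def
    by (intro sum.cong refl) (simp add: gC_torC_frame_orthogonal_Jcentral algebra_simps)
  also have "\<dots> = ?N + ?N - 0 - 0"
  proof -
    have "(\<Sum>s<m. \<Sum>q<m. cnj (?\<beta> q s) * ?\<beta> q s) = ?N"
      by (subst sum.swap) (simp add: mult.commute)
    moreover have "(\<Sum>s<m. \<Sum>q<m. cnj (?\<beta> s q) * ?\<beta> s q) = ?N"
      by (simp add: mult.commute)
    ultimately show ?thesis
      by (simp only: sum.distrib sum_subtractf bracket_coeff_cross_double_sum)
  qed
  finally show ?thesis by simp
qed

lemma Theta_orthogonal_Jcentral: "Theta g L \<mu> m F V V = 0"
  by (simp add: Theta_def chern_S_orthogonal_Jcentral chern_Q2_orthogonal_Jcentral)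

end

context
  fixes X :: "complex^'n"
  assumes X_T10: "X \<in> T10 J" and X_Jcentral: "Jcentral X"
begin

lemma Theta_Jcentral:
  "Theta g L \<mu> m F X X
    = of_real ((\<Sum>s<m. hnorm_sq (nablaC (F s) X))
      + (\<Sum>s<m. \<Sum>q<m. (cmod (gC (brC (F s) (F q)) (vcnj X)))\<^sup>2) / 2)"
proof -
  let ?\<tau> = "\<lambda>s q. gC (torC L \<mu> (F s) (F q)) (vcnj X)"
  let ?b = "\<lambda>s q. gC (brC (F s) (F q)) (vcnj X)"
  have S: "chern_S g L \<mu> m F X X = of_real (\<Sum>s<m. hnorm_sq (nablaC (F s) X))"
    by (simp add: chern_S_def gC_curvC_Jcentral F_T10 X_T10 X_Jcentral gC_vcnj_self)
  have "chern_Q2 g L \<mu> m F X X = (\<Sum>s<m. \<Sum>q<m. ?\<tau> s q * cnj (?\<tau> s q))"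
    by (simp add: chern_Q2_def torC_vcnj cnj_gC)
  also have "\<dots> = (\<Sum>s<m. \<Sum>q<m. ?b s q * cnj (?b s q))"
    by (simp add: gC_torC_Jcentral F_T10 X_T10 X_Jcentral)
  also have "\<dots> = of_real (\<Sum>s<m. \<Sum>q<m. (cmod (?b s q))\<^sup>2)"
    by (simp only: complex_norm_square of_real_sum)
  finally show ?thesis
    by (simp add: Theta_def S)
qed

lemma Theta_Jcentral_eq_0_imp:
  assumes "Theta g L \<mu> m F X X = 0"
  shows nablaC_frame_eq_0: "\<And>s. s < m \<Longrightarrow> nablaC (F s) X = 0"
    and gC_brC_frame_eq_0: "\<And>s q. s < m \<Longrightarrow> q < m \<Longrightarrow> gC (brC (F s) (F q)) (vcnj X) = 0"
proof -
  have "(\<Sum>s<m. hnorm_sq (nablaC (F s) X))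
      + (\<Sum>s<m. \<Sum>q<m. (cmod (gC (brC (F s) (F q)) (vcnj X)))\<^sup>2) / 2 = 0"
    using assms by (simp only: Theta_Jcentral of_real_eq_0_iff)
  moreover have "(\<Sum>s<m. hnorm_sq (nablaC (F s) X)) \<ge> 0"
    by (simp add: sum_nonneg hnorm_sq_nonneg)
  moreover have "(\<Sum>s<m. \<Sum>q<m. (cmod (gC (brC (F s) (F q)) (vcnj X)))\<^sup>2) \<ge> 0"
    by (simp add: sum_nonneg)
  ultimately have "(\<Sum>s<m. hnorm_sq (nablaC (F s) X)) = 0"
    and "(\<Sum>s<m. \<Sum>q<m. (cmod (gC (brC (F s) (F q)) (vcnj X)))\<^sup>2) = 0"
    by linarith+
  then show "\<And>s. s < m \<Longrightarrow> nablaC (F s) X = 0"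
    and "\<And>s q. s < m \<Longrightarrow> q < m \<Longrightarrow> gC (brC (F s) (F q)) (vcnj X) = 0"
    by (simp_all add: sum_nonneg_eq_0_iff sum_nonneg hnorm_sq_nonneg hnorm_sq_eq_0_iff)
qed

lemma gC_brC_eq_0_if_Theta_eq_0:
  assumes "Theta g L \<mu> m F X X = 0"
  shows "gC (brC U W) (vcnj X) = 0"
proof -
  have bracket_T01_T01: "gC (brC (vcnj (F s)) (vcnj (F q))) (vcnj X) = 0" if "s < m" "q < m" for s q
  proof -
    have "gC (brC (vcnj (F s)) (vcnj (F q))) (vcnj X) = cnj (gC (brC (F s) (F q)) X)"
      by (simp add: cnj_gC vcnj_brC)
    also have "gC (brC (F s) (F q)) X = 0"
      using that by (intro gC_T10_T10 bracket_T10[OF bilinear_mu integrable] F_T10 X_T10)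
    finally show ?thesis by simp
  qed
  have mixed_T10_T01: "gC (brC (F s) (vcnj (F q))) (vcnj X) = 0" if "s < m" "q < m" for s q
  proof -
    have "gC (brC (F s) (vcnj (F q))) (vcnj X) = - cnj (gC X (brC (F q) (vcnj (F s))))"
      using brC_antisym[of "F s" "vcnj (F q)"] by (simp add: cnj_gC vcnj_brC gC_sym gC_expand)
    also have "gC X (brC (F q) (vcnj (F s))) = 0"
      using that by (intro gC_brC_mixed_if_nablaC_eq_0 F_T10 X_T10 nablaC_frame_eq_0[OF assms])
    finally show ?thesis by simp
  qed
  have mixed_T01_T10: "gC (brC (vcnj (F s)) (F q)) (vcnj X) = 0" if "s < m" "q < m" for s q
    using mixed_T10_T01[OF that(2,1)] brC_antisym[of "vcnj (F s)"] by (simp add: gC_expand)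
  show ?thesis
  proof (rule gC_cext2_eq_0_if_frame_left[OF bilinear_mu])
    fix s assume "s < m"
    show "gC (brC (F s) W) (vcnj X) = 0"
      by (rule gC_cext2_eq_0_if_frame_right[OF bilinear_mu])
        (use \<open>s < m\<close> gC_brC_frame_eq_0[OF assms] mixed_T10_T01 in auto)
    show "gC (brC (vcnj (F s)) W) (vcnj X) = 0"
      by (rule gC_cext2_eq_0_if_frame_right[OF bilinear_mu])
        (use \<open>s < m\<close> bracket_T01_T01 mixed_T01_T10 in auto)
  qed
qed

end

lemma Theta_derived_ne_0:
  assumes "\<mu> a b \<noteq> 0"
  defines "X \<equiv> cx (\<mu> a b) - \<i> *s cx (J (\<mu> a b))"
  shows "Theta g L \<mu> m F X X \<noteq> 0"
proof
  assume "Theta g L \<mu> m F X X = 0"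
  moreover have "Jcentral X"
    by (simp add: X_def Jcentral_def mu_Jcenter J_Jcenter subspace_neg[OF subspace_Jcenter])
  ultimately have "gC (brC (cx a) (cx b)) (vcnj X) = 0"
    using gC_brC_eq_0_if_Theta_eq_0 T10_of_real X_def by blast
  then have "Re (gC (cx (\<mu> a b)) (vcnj X)) = 0"
    by (simp add: cext2_cx[OF bilinear_mu])
  then have "g (\<mu> a b) (\<mu> a b) = 0"
    by (simp add: X_def g_expand)
  with assms(1) g_pos show False by force
qed

end

theorem proposition4p1:
  fixes \<mu> :: "real^'n \<Rightarrow> real^'n \<Rightarrow> real^'n" and J :: "real^'n \<Rightarrow> real^'n"
  assumes "lie_algebra \<mu>"
    and "two_step_nilpotent \<mu>"
    and "complex_structure J"
    and "integrable_cs J \<mu>"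
    and "\<forall>x y. J (\<mu> x y) \<in> center \<mu>"
  shows "\<not> (\<exists>g. hcf_plus_static J \<mu> g)"
proof
  assume "\<exists>g. hcf_plus_static J \<mu> g"
  then obtain g L m F c where "hermitian_metric J g" "chern_connection J \<mu> g L"
    and "unitary_frame J g m F"
    and static: "\<forall>X\<in>T10 J. \<forall>Y\<in>T10 J.
      Theta g L \<mu> m F X Y = complex_of_real c * cform g X (vcnj Y)"
    unfolding hcf_plus_static_def by blast
  then interpret two_step_chern_frame J g \<mu> L m F
    using assms by unfold_locales auto
  obtain V where "V \<in> T10 J" "V \<noteq> 0" "\<And>C. Jcentral C \<Longrightarrow> gC V C = 0"
    using exists_T10_orthogonal_Jcentral by blast
  then have "of_real c * gC V (vcnj V) = 0"
    using static Theta_orthogonal_Jcentral by metis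
  with \<open>V \<noteq> 0\<close> have "c = 0"
    by (simp add: gC_vcnj_self_eq_0_iff)
  obtain a b where "\<mu> a b \<noteq> 0"
    using assms(2) by (auto simp: two_step_nilpotent_def)
  then show False
    using Theta_derived_ne_0 static \<open>c = 0\<close> T10_of_real by simp
qed

end
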